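(* Let $\varphi:\mathcal K\to[0,\infty)$ be a completely alternating, upper semicontinuous set-function with $\varphi(\emptyset)=0$, and let $\nu_\varphi$ be a locally finite measure on $\mathcal F'$ such that $\nu_\varphi(\mathcal F_K)=\varphi(K)$ for all $K\in\mathcal K$. Then for every $f\in\mathrm{USC}$, $$\int f\,d\varphi=\int_{\mathcal F'} f^\vee\,d\nu_\varphi\qquad\text{and}\qquad \int^e f\,d\varphi=\int^e f^\vee\,d\nu_\varphi ,$$ where on the right the first integral is the Lebesgue integral and the second is $\int^e g\,d\nu_\varphi:=\sup_{t>0} t\,\nu_\varphi(\{F\in\mathcal F':\ g(F)\ge t\})$.
   Context: $E$ is a locally compact Hausdorff second countable space; $\mathcal K$ and $\mathcal F$ denote the families of compact and closed subsets of $E$, $\mathcal F'=\mathcal F\setminus\{\emptyset\}$, and for $K\in\mathcal K$, $\mathcal F_K=\{F\in\mathcal F:\ F\cap K\neq\emptyset\}$; $\mathcal F'$ carries the $\sigma$-algebra generated by the sets $\mathcal F_K$, $K\in\mathcal K$. A measure $\nu$ on $\mathcal F'$ is locally finite if $\nu(\mathcal F_K)<\infty$ for all $K\in\mathcal K$. $\varphi:\mathcal K\to[0,\infty)$ is completely alternating if the recursively defined differences $\Delta_{K_1}\varphi(K)=\varphi(K)-\varphi(K\cup K_1)$, $\Delta_{K_n}\cdots\Delta_{K_1}\varphi(K)=\Delta_{K_{n-1}}\cdots\Delta_{K_1}\varphi(K)-\Delta_{K_{n-1}}\cdots\Delta_{K_1}\varphi(K\cup K_n)$ are $\le 0$ for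 all $n\ge1$ and $K,K_1,\dots,K_n\in\mathcal K$; it is upper semicontinuous if $\varphi(K_n)\downarrow\varphi(K)$ whenever $K_n\downarrow K$ in $\mathcal K$. $\mathrm{USC}$ is the family of bounded non-negative upper semicontinuous functions on $E$ with relatively compact support $\{f\neq0\}$ (so $\{f\ge t\}\in\mathcal K$ for $t>0$). For $f\in\mathrm{USC}$: Choquet integral $\int f\,d\varphi=\int_0^\infty\varphi(\{f\ge t\})\,dt$; extremal integral $\int^e f\,d\varphi=\sup\{\varphi(K)\inf_{x\in K}f(x):\ K\in\mathcal K\}$. For a closed set $F$, $f^\vee(F)=\sup_{x\in F}f(x)$. *)

theory Defs
  imports "HOL-Analysis.Analysis"
begin

text \<open>Iterated differences. The list [K_n, ..., K_1] encodes Delta_{K_n} ... Delta_{K_1} phi(K).\<close>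
fun Delta :: "('a set \<Rightarrow> real) \<Rightarrow> 'a set list \<Rightarrow> 'a set \<Rightarrow> real" where
  "Delta \<phi> [] K = \<phi> K"
| "Delta \<phi> (Kn # Ks) K = Delta \<phi> Ks K - Delta \<phi> Ks (K \<union> Kn)"

definition completely_alternating :: "('a::topological_space set \<Rightarrow> real) \<Rightarrow> bool" where
  "completely_alternating \<phi> \<longleftrightarrow>
     (\<forall>Ks K. Ks \<noteq> [] \<and> compact K \<and> (\<forall>L\<in>set Ks. compact L) \<longrightarrow> Delta \<phi> Ks K \<le> 0)"

definition usc_setfun :: "('a::topological_space set \<Rightarrow> real) \<Rightarrow> bool" where
  "usc_setfun \<phi> \<longleftrightarrow>
     (\<forall>Kn :: nat \<Rightarrow> 'a set. (\<forall>n. compact (Kn n)) \<and> decseq Kn \<longrightarrow>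
        (\<lambda>n. \<phi> (Kn n)) \<longlonglongrightarrow> \<phi> (\<Inter>n. Kn n))"

definition hitting :: "'a::topological_space set \<Rightarrow> 'a set set" where
  "hitting K = {F. closed F \<and> F \<noteq> {} \<and> F \<inter> K \<noteq> {}}"

definition closed_nonempty :: "'a::topological_space set set" where
  "closed_nonempty = {F. closed F \<and> F \<noteq> {}}"

definition USC :: "('a::topological_space \<Rightarrow> real) set" where
  "USC = {f. bounded (range f) \<and> (\<forall>x. f x \<ge> 0) \<and> (\<forall>t. open {x. f x < t})
              \<and> compact (closure {x. f x \<noteq> 0})}"

definition choquet_integral :: "('a \<Rightarrow> real) \<Rightarrow> ('a set \<Rightarrow> real) \<Rightarrow> ennreal" where
  "choquet_integral f \<phi> = (\<integral>\<^sup>+ t. indicator {0<..} t * ennreal (\<phi> {x. f x \<ge> t}) \<partial>lborel)"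

definition extremal_integral :: "('a::topological_space \<Rightarrow> real) \<Rightarrow> ('a set \<Rightarrow> real) \<Rightarrow> ennreal" where
  "extremal_integral f \<phi> = (SUP K\<in>{K. compact K}. ennreal (\<phi> K * Inf (f ` K)))"

definition sup_on :: "('a \<Rightarrow> real) \<Rightarrow> 'a set \<Rightarrow> real" where
  "sup_on f F = Sup (f ` F)"

definition extremal_integral_measure :: "('b \<Rightarrow> real) \<Rightarrow> 'b measure \<Rightarrow> ennreal" where
  "extremal_integral_measure g M = (SUP t\<in>{0<..}. ennreal t * emeasure M {F\<in>space M. g F \<ge> t})"

end

theory Submission
  imports Defs
begin

text \<open>Since \<open>f\<close> is upper semicontinuous with compact support, the supremum of \<open>f\<close> over a
  nonempty closed set is attained. Hence the level set \<open>{F. t \<le> f\<^sup>\<or>(F)}\<close> is exactly the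
  hitting family \<open>\<F>\<^sub>K\<close> of the compact level set \<open>K = {t \<le> f}\<close>, whose \<open>\<nu>\<close>-measure is
  \<open>\<phi>(K)\<close>. The Choquet integral is then the layer-cake formula for \<open>\<integral> f\<^sup>\<or> d\<nu>\<close>, and both
  extremal integrals reduce to \<open>sup\<^sub>t t \<phi>({t \<le> f})\<close>, using only that \<open>\<phi>\<close> is monotone.\<close>

lemma USC_D:
  assumes "f \<in> USC"
  shows "0 \<le> f x" "open {x. f x < t}" "compact (closure {x. f x \<noteq> 0})"
  using assms unfolding USC_def by auto

lemma USC_level_compact:
  assumes "f \<in> USC" "0 < t"
  shows "compact {x. t \<le> f x}"
proof -
  have "{x. t \<le> f x} = - {x. f x < t}"
    by auto
  then have "closed {x. t \<le> f x}"
    using USC_D(2)[OF assms(1)] by (simp add: closed_def)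
  then have "compact (closure {x. f x \<noteq> 0} \<inter> {x. t \<le> f x})"
    using USC_D(3)[OF assms(1)] by (rule compact_Int_closed[rotated])
  moreover have "closure {x. f x \<noteq> 0} \<inter> {x. t \<le> f x} = {x. t \<le> f x}"
    using assms(2) closure_subset by fastforce
  ultimately show ?thesis
    by simp
qed

lemma usc_attains_max:
  fixes f :: "'a::topological_space \<Rightarrow> real"
  assumes "compact K" "K \<noteq> {}" and usc: "\<And>t. open {x. f x < t}"
  shows "\<exists>x\<in>K. \<forall>y\<in>K. f y \<le> f x"
proof (rule ccontr)
  assume "\<not> ?thesis"
  then have cover: "K \<subseteq> (\<Union>x\<in>K. {y. f y < f x})"
    by (auto simp: not_le)
  obtain D where D: "D \<subseteq> K" "finite D" "K \<subseteq> (\<Union>x\<in>D. {y. f y < f x})"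
    using compactE_image[OF assms(1), of K "\<lambda>x. {y. f y < f x}"] usc cover by blast
  with assms(2) have "D \<noteq> {}" by blast
  with D(2) have "Max (f ` D) \<in> f ` D"
    by simp
  then obtain x where x: "x \<in> D" "f x = Max (f ` D)"
    by auto
  then obtain z where "z \<in> D" "f x < f z"
    using D(1,3) by blast
  moreover have "f z \<le> Max (f ` D)"
    using D(2) \<open>z \<in> D\<close> by simp
  ultimately show False
    using x(2) by linarith
qed

lemma USC_sup_on_attained:
  assumes "f \<in> USC" "closed F" "F \<noteq> {}"
  shows "\<exists>x\<in>F. sup_on f F = f x \<and> (\<forall>y\<in>F. f y \<le> f x)"
proof -
  let ?C = "closure {x. f x \<noteq> 0}"
  have "{x. f x \<noteq> 0} \<subseteq> ?C"
    by (rule closure_subset)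
  then have outside: "f y = 0" if "y \<notin> ?C" for y
    using that by blast
  obtain x where x: "x \<in> F" "\<forall>y\<in>F. f y \<le> f x"
  proof (cases "F \<inter> ?C = {}")
    case True
    obtain x where "x \<in> F"
      using assms(3) by blast
    moreover have "\<forall>y\<in>F. f y = 0"
      using True outside by blast
    ultimately show ?thesis
      using that by force
  next
    case False
    have "compact (F \<inter> ?C)"
      by (rule closed_Int_compact[OF assms(2) USC_D(3)[OF assms(1)]])
    then obtain x where x: "x \<in> F \<inter> ?C" "\<forall>y\<in>F \<inter> ?C. f y \<le> f x"
      using usc_attains_max[OF _ False USC_D(2)[OF assms(1)]] by auto
    have "f y \<le> f x" if "y \<in> F" for y
      using that x outside[of y] USC_D(1)[OF assms(1), of x] by (cases "y \<in> ?C") auto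
    with x(1) that show ?thesis by blast
  qed
  then have "sup_on f F = f x"
    unfolding sup_on_def by (intro cSup_eq_maximum) auto
  with x show ?thesis by blast
qed

lemma USC_sup_on_nonneg:
  assumes "f \<in> USC" "closed F" "F \<noteq> {}"
  shows "0 \<le> sup_on f F"
proof -
  obtain x where "sup_on f F = f x"
    using USC_sup_on_attained[OF assms] by blast
  then show ?thesis
    using USC_D(1)[OF assms(1)] by simp
qed

lemma USC_sup_on_eq_0:
  assumes "f \<in> USC" "closed F" "F \<noteq> {}" "F \<inter> closure {x. f x \<noteq> 0} = {}"
  shows "sup_on f F = 0"
proof -
  obtain x where x: "x \<in> F" "sup_on f F = f x"
    using USC_sup_on_attained[OF assms(1-3)] by blast
  then have "x \<notin> closure {x. f x \<noteq> 0}"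
    using assms(4) by blast
  then have "f x = 0"
    using closure_subset[of "{x. f x \<noteq> 0}"] by blast
  with x show ?thesis
    by simp
qed

lemma USC_sup_on_level_set:
  assumes "f \<in> USC"
  shows "{F \<in> closed_nonempty. t \<le> sup_on f F} = hitting {x. t \<le> f x}"
proof (intro set_eqI iffI)
  fix F assume "F \<in> {F \<in> closed_nonempty. t \<le> sup_on f F}"
  then have F: "closed F" "F \<noteq> {}" and t: "t \<le> sup_on f F"
    by (auto simp: closed_nonempty_def)
  obtain x where "x \<in> F" "sup_on f F = f x"
    using USC_sup_on_attained[OF assms F] by blast
  with F t show "F \<in> hitting {x. t \<le> f x}"
    unfolding hitting_def by auto
next
  fix F assume "F \<in> hitting {x. t \<le> f x}"
  then obtain y where F: "closed F" "F \<noteq> {}" and y: "y \<in> F" "t \<le> f y"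
    unfolding hitting_def by blast
  obtain x where "sup_on f F = f x" "\<forall>y\<in>F. f y \<le> f x"
    using USC_sup_on_attained[OF assms F] by blast
  with F y show "F \<in> {F \<in> closed_nonempty. t \<le> sup_on f F}"
    unfolding closed_nonempty_def by force
qed

lemma measurable_sup_on_USC:
  assumes "f \<in> USC" and space: "space M = closed_nonempty"
    and sets: "sets M = sigma_sets closed_nonempty {hitting K | K. compact K}"
  shows "sup_on f \<in> borel_measurable M"
  unfolding borel_measurable_iff_ge
proof
  fix t :: real
  show "{F \<in> space M. t \<le> sup_on f F} \<in> sets M"
  proof (cases "0 < t")
    case True
    then have "hitting {x. t \<le> f x} \<in> sets M"
      unfolding sets using USC_level_compact[OF assms(1)] by (auto intro: sigma_sets.Basic)
    then show ?thesis
      using USC_sup_on_level_set[OF assms(1)] by (simp add: space)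
  next
    case False
    have "t \<le> sup_on f F" if "F \<in> space M" for F
      using that False USC_sup_on_nonneg[OF assms(1), of F] by (simp add: space closed_nonempty_def)
    then have "{F \<in> space M. t \<le> sup_on f F} = space M"
      by blast
    then show ?thesis
      by simp
  qed
qed

lemma nn_integral_layer_cake:
  fixes g :: "'a \<Rightarrow> real"
  assumes "sigma_finite_measure M" and g[measurable]: "g \<in> borel_measurable M"
    and nonneg: "\<And>x. x \<in> space M \<Longrightarrow> 0 \<le> g x"
  shows "(\<integral>\<^sup>+x. ennreal (g x) \<partial>M) =
    (\<integral>\<^sup>+t. indicator {0<..} t * emeasure M {x\<in>space M. t \<le> g x} \<partial>lborel)"
proof -
  interpret pair_sigma_finite M lborel
    by (simp add: pair_sigma_finite_def assms(1) sigma_finite_lborel)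
  have "(\<integral>\<^sup>+x. ennreal (g x) \<partial>M) =
      (\<integral>\<^sup>+x. (\<integral>\<^sup>+t. (if 0 < t \<and> t \<le> g x then 1 else 0) \<partial>lborel) \<partial>M)"
  proof (rule nn_integral_cong)
    fix x assume "x \<in> space M"
    then have "(\<integral>\<^sup>+t. indicator {0<..g x} t \<partial>lborel) = ennreal (g x)"
      using nonneg by simp
    then show "ennreal (g x) = (\<integral>\<^sup>+t. (if 0 < t \<and> t \<le> g x then 1 else 0) \<partial>lborel)"
      by (simp add: indicator_def of_bool_def)
  qed
  also have "\<dots> = (\<integral>\<^sup>+t. (\<integral>\<^sup>+x. (if 0 < t \<and> t \<le> g x then 1 else 0) \<partial>M) \<partial>lborel)"
    by (rule Fubini'[symmetric]) measurable
  also have "\<dots> = (\<integral>\<^sup>+t. indicator {0<..} t * emeasure M {x\<in>space M. t \<le> g x} \<partial>lborel)"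
  proof (rule nn_integral_cong)
    fix t :: real
    have "(\<integral>\<^sup>+x. (if 0 < t \<and> t \<le> g x then 1 else 0) \<partial>M) =
        (\<integral>\<^sup>+x. indicator {0<..} t * indicator {x\<in>space M. t \<le> g x} x \<partial>M)"
      by (rule nn_integral_cong) (simp add: indicator_def)
    also have "\<dots> = indicator {0<..} t * emeasure M {x\<in>space M. t \<le> g x}"
      by (rule nn_integral_cmult_indicator) measurable
    finally show "(\<integral>\<^sup>+x. (if 0 < t \<and> t \<le> g x then 1 else 0) \<partial>M) =
        indicator {0<..} t * emeasure M {x\<in>space M. t \<le> g x}" .
  qed
  finally show ?thesis .
qed

lemma nn_integral_layer_cake_finite_support:
  fixes g :: "'a \<Rightarrow> real"
  assumes g[measurable]: "g \<in> borel_measurable M"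
    and nonneg: "\<And>x. x \<in> space M \<Longrightarrow> 0 \<le> g x"
    and A: "A \<in> sets M" "emeasure M A < \<infinity>"
    and support: "\<And>x. x \<in> space M - A \<Longrightarrow> g x = 0"
  shows "(\<integral>\<^sup>+x. ennreal (g x) \<partial>M) =
    (\<integral>\<^sup>+t. indicator {0<..} t * emeasure M {x\<in>space M. t \<le> g x} \<partial>lborel)"
proof -
  let ?N = "restrict_space M A"
  have A_space: "A \<subseteq> space M"
    using A(1) by (rule sets.sets_into_space)
  then have space_N: "space ?N = A"
    by (auto simp: space_restrict_space)
  have emeasure_N: "emeasure ?N B = emeasure M B" if "B \<subseteq> A" for B
    using that A(1) by (simp add: emeasure_restrict_space)
  interpret N: finite_measure ?N
    by (rule finite_measureI) (use A(2) in \<open>simp add: space_N emeasure_N less_top\<close>)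
  have "(\<integral>\<^sup>+x. ennreal (g x) \<partial>M) = (\<integral>\<^sup>+x. ennreal (g x) * indicator A x \<partial>M)"
    by (rule nn_integral_cong) (auto simp: support split: split_indicator)
  also have "\<dots> = (\<integral>\<^sup>+x. ennreal (g x) \<partial>?N)"
    using A(1) by (simp add: nn_integral_restrict_space)
  also have "\<dots> = (\<integral>\<^sup>+t. indicator {0<..} t * emeasure ?N {x\<in>space ?N. t \<le> g x} \<partial>lborel)"
    using N.sigma_finite_measure_axioms
    by (rule nn_integral_layer_cake)
      (use A_space in \<open>auto simp: space_N nonneg intro: measurable_restrict_space1\<close>)
  also have "\<dots> = (\<integral>\<^sup>+t. indicator {0<..} t * emeasure M {x\<in>space M. t \<le> g x} \<partial>lborel)"
  proof (rule nn_integral_cong)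
    fix t :: real
    have "{x\<in>space M. t \<le> g x} \<subseteq> A" if "0 < t"
      using that support by force
    then show "indicator {0<..} t * emeasure ?N {x\<in>space ?N. t \<le> g x} =
        indicator {0<..} t * emeasure M {x\<in>space M. t \<le> g x}"
      using A_space
      by (cases "0 < t") (auto simp: space_N emeasure_N intro!: arg_cong[where f="emeasure M"])
  qed
  finally show ?thesis .
qed

lemma completely_alternating_mono:
  assumes "completely_alternating \<phi>" "compact K" "compact L" "K \<subseteq> L"
  shows "\<phi> K \<le> \<phi> L"
proof -
  have "Delta \<phi> [L] K \<le> 0"
    using assms(1)[unfolded completely_alternating_def, rule_format, of "[L]" K] assms(2,3)
    by simp
  with assms(4) show ?thesis
    by (simp add: sup_absorb2)
qed

lemma extremal_integral_eq_SUP_levels: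
  assumes f: "f \<in> USC" and empty: "\<phi> {} = 0"
    and nonneg: "\<And>K. compact K \<Longrightarrow> 0 \<le> \<phi> K"
    and mono: "\<And>K L. compact K \<Longrightarrow> compact L \<Longrightarrow> K \<subseteq> L \<Longrightarrow> \<phi> K \<le> \<phi> L"
  shows "extremal_integral f \<phi> = (SUP t\<in>{0<..}. ennreal (t * \<phi> {x. t \<le> f x}))"
  unfolding extremal_integral_def
proof (rule antisym)
  show "(SUP K\<in>{K. compact K}. ennreal (\<phi> K * Inf (f ` K)))
      \<le> (SUP t\<in>{0<..}. ennreal (t * \<phi> {x. t \<le> f x}))"
  proof (rule SUP_least)
    fix K :: "'a set" assume "K \<in> {K. compact K}"
    then have K: "compact K" by simp
    define m where "m = Inf (f ` K)"
    show "ennreal (\<phi> K * Inf (f ` K)) \<le> (SUP t\<in>{0<..}. ennreal (t * \<phi> {x. t \<le> f x}))"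
    proof (cases "K \<noteq> {} \<and> 0 < m")
      case True
      have "bdd_below (f ` K)"
        using USC_D(1)[OF f] by (auto intro: bdd_belowI[where m=0])
      then have "K \<subseteq> {x. m \<le> f x}"
        unfolding m_def by (auto intro: cInf_lower)
      then have "\<phi> K \<le> \<phi> {x. m \<le> f x}"
        using True by (intro mono K USC_level_compact[OF f]) auto
      then have "ennreal (\<phi> K * m) \<le> ennreal (m * \<phi> {x. m \<le> f x})"
        using True by (intro ennreal_leI) (simp add: mult.commute)
      also have "\<dots> \<le> (SUP t\<in>{0<..}. ennreal (t * \<phi> {x. t \<le> f x}))"
        using True by (intro SUP_upper) simp
      finally show ?thesis
        unfolding m_def .
    next
      case False
      then have "\<phi> K * m \<le> 0"
        using empty nonneg[OF K] by (auto simp: mult_nonneg_nonpos)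
      then show ?thesis
        by (simp add: m_def ennreal_neg)
    qed
  qed
next
  show "(SUP t\<in>{0<..}. ennreal (t * \<phi> {x. t \<le> f x}))
      \<le> (SUP K\<in>{K. compact K}. ennreal (\<phi> K * Inf (f ` K)))"
  proof (rule SUP_least)
    fix t :: real assume "t \<in> {0<..}"
    define K where "K = {x. t \<le> f x}"
    have K: "compact K"
      unfolding K_def using USC_level_compact[OF f] \<open>t \<in> {0<..}\<close> by simp
    have "t * \<phi> K \<le> \<phi> K * Inf (f ` K)"
    proof (cases "K = {}")
      case False
      then have "t \<le> Inf (f ` K)"
        unfolding K_def by (intro cInf_greatest) auto
      from mult_right_mono[OF this nonneg[OF K]] show ?thesis
        by (simp add: mult.commute)
    qed (simp add: empty)
    then have "ennreal (t * \<phi> K) \<le> ennreal (\<phi> K * Inf (f ` K))"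
      by (rule ennreal_leI)
    also have "\<dots> \<le> (SUP K\<in>{K. compact K}. ennreal (\<phi> K * Inf (f ` K)))"
      using K by (intro SUP_upper) simp
    finally show "ennreal (t * \<phi> {x. t \<le> f x})
        \<le> (SUP K\<in>{K. compact K}. ennreal (\<phi> K * Inf (f ` K)))"
      unfolding K_def .
  qed
qed

theorem mainTheorem1:
  fixes \<phi> :: "'a::{t2_space, second_countable_topology} set \<Rightarrow> real"
    and \<nu> :: "'a set measure"
    and f :: "'a \<Rightarrow> real"
  assumes lc: "locally_compact_space (euclidean :: 'a topology)"
    and nonneg: "\<And>K. compact K \<Longrightarrow> \<phi> K \<ge> 0"
    and ca: "completely_alternating \<phi>"
    and usc: "usc_setfun \<phi>"
    and empty: "\<phi> {} = 0"
    and space_nu: "space \<nu> = closed_nonempty"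
    and sets_nu: "sets \<nu> = sigma_sets closed_nonempty {hitting K | K. compact K}"
    and loc_fin: "\<And>K. compact K \<Longrightarrow> emeasure \<nu> (hitting K) < \<infinity>"
    and capacity: "\<And>K. compact K \<Longrightarrow> emeasure \<nu> (hitting K) = ennreal (\<phi> K)"
    and f_usc: "f \<in> USC"
  shows "choquet_integral f \<phi> = (\<integral>\<^sup>+ F. ennreal (sup_on f F) \<partial>\<nu>)
     \<and> extremal_integral f \<phi> = extremal_integral_measure (sup_on f) \<nu>"
proof -
  let ?C = "closure {x. f x \<noteq> 0}"
  have hitting_sets: "hitting K \<in> sets \<nu>" if "compact K" for K
    using that unfolding sets_nu by (auto intro: sigma_sets.Basic)
  have levels: "emeasure \<nu> {F \<in> space \<nu>. t \<le> sup_on f F} = ennreal (\<phi> {x. t \<le> f x})"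
    if "0 < t" for t
    using capacity[OF USC_level_compact[OF f_usc that]] USC_sup_on_level_set[OF f_usc]
    by (simp add: space_nu)
  have "(\<integral>\<^sup>+F. ennreal (sup_on f F) \<partial>\<nu>) =
      (\<integral>\<^sup>+t. indicator {0<..} t * emeasure \<nu> {F \<in> space \<nu>. t \<le> sup_on f F} \<partial>lborel)"
  proof (rule nn_integral_layer_cake_finite_support)
    show "sup_on f \<in> borel_measurable \<nu>"
      by (rule measurable_sup_on_USC[OF f_usc space_nu sets_nu])
    show "0 \<le> sup_on f F" if "F \<in> space \<nu>" for F
      using that USC_sup_on_nonneg[OF f_usc] by (simp add: space_nu closed_nonempty_def)
    show "hitting ?C \<in> sets \<nu>"
      by (rule hitting_sets[OF USC_D(3)[OF f_usc]])
    show "emeasure \<nu> (hitting ?C) < \<infinity>"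
      by (rule loc_fin[OF USC_D(3)[OF f_usc]])
    show "sup_on f F = 0" if "F \<in> space \<nu> - hitting ?C" for F
      using that USC_sup_on_eq_0[OF f_usc] by (auto simp: space_nu closed_nonempty_def hitting_def)
  qed
  also have "\<dots> = choquet_integral f \<phi>"
    unfolding choquet_integral_def
    by (rule nn_integral_cong) (simp add: levels split: split_indicator)
  moreover have "extremal_integral_measure (sup_on f) \<nu> =
      (SUP t\<in>{0<..}. ennreal (t * \<phi> {x. t \<le> f x}))"
    unfolding extremal_integral_measure_def
    using levels nonneg[OF USC_level_compact[OF f_usc]]
    by (intro SUP_cong) (simp_all add: ennreal_mult)
  moreover have "\<dots> = extremal_integral f \<phi>"
    using extremal_integral_eq_SUP_levels[of f \<phi>, OF f_usc empty nonneg]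
      completely_alternating_mono[OF ca] by simp
  ultimately show ?thesis
    by simp
qed

end
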